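(* Let $\mathcal{D}=\{(x_i,a_i,y_i)\}_{i=1}^N$ be a dataset with $a_i\in\{1,2\}$, $y_i\in\{0,1\}$. The procedure "GABOS learning with post-processing" (described in the context), with misclassification loss and with bias measured by demographic parity or equal opportunity, is slack-consistent: for every individual $(x,a)$ (not necessarily in $\mathcal{D}$), the prediction $f_\beta(x,a)$ of the returned classifier is monotonic in the slack $\beta>0$.
   Context: GABOS learning with post-processing, for slack $\beta>0$: (1) Split $\mathcal{D}$ into $\mathcal{D}_j=\{(x_i,a_i,y_i): a_i=j\}$, $j=1,2$. (2) For each $j$ fix (independently of $\beta$) a finite partition $c_j:\mathcal{X}\to\{1,\dots,M\}$ of the feature space such that every cell contains at least one member of $\mathcal{D}_j$ (e.g. obtained by clustering or a decision tree). (3) For each $j$ and cell $m$ set $f_j(m)=\frac{|\{i: y_i=1, (x_i,a_i,y_i)\in\mathcal{D}_j, c_j(x_i)=m\}|}{|\{i:(x_i,a_i,y_i)\in\mathcal{D}_j, c_j(x_i)=m\}|}$. (4) Define the score $\mathcal{R}(x,a)=f_a(c_a(x))$ and run the post-processing method below on $\mathcal{R}$ with slack $\beta$; return the resulting thresholded classifier $f_\beta$. Post-processing: a normalized threshold $\tau\in[0,1]$ for group $a$ is a threshold classifier on $\mathcal{R}$ within group $a$, randomized over at most two adjacent deterministic thresholds, with positive prediction rate $1-\tau$ in group $a$ on $\mathcal{D}$; a pair $(\tau_1,\tau_2)$ defines a classifier with misclassification loss $\mathcal{L}(\tau_1,\tau_2)$ on $\mathcal{D}$ and bias $\mathcal{B}(\tau_1,\tau_2)$.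 Among all $(\tau_1,\tau_2)\in[0,1]^2$ minimizing $\mathcal{L}$ subject to $|\mathcal{B}|\le\beta$, keep those with smallest $|\mathcal{B}|$, then those with smallest $\tau_1$, then return the one with smallest $\tau_2$. Bias: for a classifier $f$ with positive-prediction probability $f(x,a)\in[0,1]$, demographic-parity bias is $\frac{\sum_i f(x_i,a_i)\mathbb{1}[a_i=1]}{\sum_i\mathbb{1}[a_i=1]}-\frac{\sum_i f(x_i,a_i)\mathbb{1}[a_i=2]}{\sum_i\mathbb{1}[a_i=2]}$; equal-opportunity bias is the same with $y_i=1$ added to every indicator. Slack-consistency: for every $(x,a)$ and all $\beta_1<\beta_2<\beta_3$, either $f_{\beta_1}(x,a)\le f_{\beta_2}(x,a)\le f_{\beta_3}(x,a)$ or $f_{\beta_1}(x,a)\ge f_{\beta_2}(x,a)\ge f_{\beta_3}(x,a)$. *)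

theory Defs
  imports Complex_Main
begin

type_synonym 'x dataset = "('x \<times> nat \<times> nat) list"

definition xs_of :: "'x dataset \<Rightarrow> nat \<Rightarrow> 'x" where "xs_of D i = fst (D ! i)"
definition as_of :: "'x dataset \<Rightarrow> nat \<Rightarrow> nat" where "as_of D i = fst (snd (D ! i))"
definition ys_of :: "'x dataset \<Rightarrow> nat \<Rightarrow> nat" where "ys_of D i = snd (snd (D ! i))"

definition grp :: "'x dataset \<Rightarrow> nat \<Rightarrow> nat set" where
  "grp D j = {i. i < length D \<and> as_of D i = j}"

text \<open>Cell frequency f_j(m) for the partitions c_j (c j is the partition of group j).\<close>
definition cell_rate :: "'x dataset \<Rightarrow> (nat \<Rightarrow> 'x \<Rightarrow> nat) \<Rightarrow> nat \<Rightarrow> nat \<Rightarrow> real" where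
  "cell_rate D c j m =
     real (card {i \<in> grp D j. c j (xs_of D i) = m \<and> ys_of D i = 1})
     / real (card {i \<in> grp D j. c j (xs_of D i) = m})"

definition score :: "'x dataset \<Rightarrow> (nat \<Rightarrow> 'x \<Rightarrow> nat) \<Rightarrow> 'x \<Rightarrow> nat \<Rightarrow> real" where
  "score D c x a = cell_rate D c a (c a x)"

text \<open>Randomized threshold classifier on the score: mixture with weight p of the two adjacent
  deterministic thresholds "score \<ge> t" and "score > t" (probability of predicting 1).\<close>
definition thr_clf :: "real \<Rightarrow> real \<Rightarrow> real \<Rightarrow> real" where
  "thr_clf t p s = (if t < s then 1 else if s = t then p else 0)"

definition pos_rate :: "'x dataset \<Rightarrow> (nat \<Rightarrow> 'x \<Rightarrow> nat) \<Rightarrow> nat \<Rightarrow> (real \<Rightarrow> real) \<Rightarrow> real" where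
  "pos_rate D c a h = (\<Sum>i\<in>grp D a. h (score D c (xs_of D i) a)) / real (card (grp D a))"

definition norm_thr_clf :: "'x dataset \<Rightarrow> (nat \<Rightarrow> 'x \<Rightarrow> nat) \<Rightarrow> nat \<Rightarrow> real \<Rightarrow> (real \<Rightarrow> real)" where
  "norm_thr_clf D c a \<tau> = (SOME h. \<exists>t p. t \<in> (\<lambda>i. score D c (xs_of D i) a) ` grp D a
       \<and> 0 \<le> p \<and> p \<le> 1 \<and> h = thr_clf t p \<and> pos_rate D c a h = 1 - \<tau>)"

definition pp_clf :: "'x dataset \<Rightarrow> (nat \<Rightarrow> 'x \<Rightarrow> nat) \<Rightarrow> real \<times> real \<Rightarrow> 'x \<Rightarrow> nat \<Rightarrow> real" where
  "pp_clf D c \<tau> x a = norm_thr_clf D c a (if a = 1 then fst \<tau> else snd \<tau>) (score D c x a)"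

definition pred_at :: "'x dataset \<Rightarrow> (nat \<Rightarrow> 'x \<Rightarrow> nat) \<Rightarrow> real \<times> real \<Rightarrow> nat \<Rightarrow> real" where
  "pred_at D c \<tau> i = pp_clf D c \<tau> (xs_of D i) (as_of D i)"

definition mis_loss :: "'x dataset \<Rightarrow> (nat \<Rightarrow> 'x \<Rightarrow> nat) \<Rightarrow> real \<times> real \<Rightarrow> real" where
  "mis_loss D c \<tau> = (\<Sum>i<length D. if ys_of D i = 1 then 1 - pred_at D c \<tau> i else pred_at D c \<tau> i)
                    / real (length D)"

datatype bias_kind = DemParity | EqOpp

definition relevant :: "bias_kind \<Rightarrow> 'x dataset \<Rightarrow> nat \<Rightarrow> bool" where
  "relevant k D i = (case k of DemParity \<Rightarrow> True | EqOpp \<Rightarrow> ys_of D i = 1)"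

definition bias :: "bias_kind \<Rightarrow> 'x dataset \<Rightarrow> (nat \<Rightarrow> 'x \<Rightarrow> nat) \<Rightarrow> real \<times> real \<Rightarrow> real" where
  "bias k D c \<tau> =
     (\<Sum>i | i \<in> grp D 1 \<and> relevant k D i. pred_at D c \<tau> i) / real (card {i. i \<in> grp D 1 \<and> relevant k D i})
   - (\<Sum>i | i \<in> grp D 2 \<and> relevant k D i. pred_at D c \<tau> i) / real (card {i. i \<in> grp D 2 \<and> relevant k D i})"

definition feasible :: "bias_kind \<Rightarrow> 'x dataset \<Rightarrow> (nat \<Rightarrow> 'x \<Rightarrow> nat) \<Rightarrow> real \<Rightarrow> (real \<times> real) set" where
  "feasible k D c \<beta> = {\<tau>. fst \<tau> \<in> {0..1} \<and> snd \<tau> \<in> {0..1} \<and> \<bar>bias k D c \<tau>\<bar> \<le> \<beta>}"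

definition argmin_on :: "('a \<Rightarrow> real) \<Rightarrow> 'a set \<Rightarrow> 'a set" where
  "argmin_on g S = {s \<in> S. \<forall>s'\<in>S. g s \<le> g s'}"

definition pp_select :: "bias_kind \<Rightarrow> 'x dataset \<Rightarrow> (nat \<Rightarrow> 'x \<Rightarrow> nat) \<Rightarrow> real \<Rightarrow> real \<times> real" where
  "pp_select k D c \<beta> = (THE \<tau>. \<tau> \<in>
      argmin_on snd (argmin_on fst (argmin_on (\<lambda>\<tau>. \<bar>bias k D c \<tau>\<bar>)
        (argmin_on (mis_loss D c) (feasible k D c \<beta>)))))"

definition gabos_pp :: "bias_kind \<Rightarrow> 'x dataset \<Rightarrow> (nat \<Rightarrow> 'x \<Rightarrow> nat) \<Rightarrow> real \<Rightarrow> 'x \<Rightarrow> nat \<Rightarrow> real" where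
  "gabos_pp k D c \<beta> x a = pp_clf D c (pp_select k D c \<beta>) x a"

definition slack_consistent :: "(real \<Rightarrow> 'x \<Rightarrow> nat \<Rightarrow> real) \<Rightarrow> bool" where
  "slack_consistent F = (\<forall>x a \<beta>1 \<beta>2 \<beta>3. a \<in> {1,2} \<and> 0 < \<beta>1 \<and> \<beta>1 < \<beta>2 \<and> \<beta>2 < \<beta>3 \<longrightarrow>
      (F \<beta>1 x a \<le> F \<beta>2 x a \<and> F \<beta>2 x a \<le> F \<beta>3 x a) \<or>
      (F \<beta>1 x a \<ge> F \<beta>2 x a \<and> F \<beta>2 x a \<ge> F \<beta>3 x a))"

end

(*
  A normalized threshold tau of group j determines the group's positive rate b_j(tau) among the
  members relevant for the bias, and its share l_j(tau) of the misclassification loss. Since the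
  GABOS scores are cell frequencies, the expected number of true positives of a classifier is the
  score mass of its predicted positives, and among all classifiers with a given positive rate a
  threshold classifier maximizes that mass. So the true positives are concave in tau, and any
  mixture of two achievable (rate, loss) pairs of a group is dominated by an achievable pair.

  If the selected pair changes between slacks
  beta < beta', the old pair lies on the boundary |bias| = beta and the new one strictly further out
  on the same side: otherwise a mixture of the two would be feasible for beta and cheaper. Moving
  rate from one group to the other, which keeps both biases and does not increase the total loss,
  together with the tie-break on the first threshold shows that a larger bias comes with a larger
  rate of group 1 and a smaller rate of group 2. Hence both thresholds move monotonically with the
  slack, and so does every prediction, the randomized threshold classifiers being nested.
*)

theory Submission
  imports Defs "HOL-Analysis.Analysis"
begin

section \<open>Lexicographic selection under a convex two-group tradeoff\<close>

lemma argmin_on_subset: "argmin_on g S \<subseteq> S"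
  unfolding argmin_on_def by auto

lemma argmin_on_le: "x \<in> argmin_on g S \<Longrightarrow> y \<in> S \<Longrightarrow> g x \<le> g y"
  unfolding argmin_on_def by auto

lemma argmin_on_tie: "x \<in> argmin_on g S \<Longrightarrow> y \<in> S \<Longrightarrow> g y \<le> g x \<Longrightarrow> y \<in> argmin_on g S"
  unfolding argmin_on_def by (auto intro: order_trans)

lemma argmin_on_compact:
  fixes g :: "'a::t2_space \<Rightarrow> real"
  assumes "compact S" "S \<noteq> {}" "continuous_on S g"
  shows "compact (argmin_on g S) \<and> argmin_on g S \<noteq> {}"
proof -
  obtain x where x: "x \<in> S" "\<forall>y\<in>S. g x \<le> g y"
    using continuous_attains_inf[OF assms] by blast
  then have "argmin_on g S = S \<inter> g -` {..g x}"
    unfolding argmin_on_def by force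
  moreover have "closed (S \<inter> g -` {..g x})"
    using continuous_closed_preimage[OF assms(3) compact_imp_closed[OF assms(1)]] by simp
  ultimately have "compact (argmin_on g S)"
    using compact_Int_closed[OF assms(1)] by (metis Int_absorb1 argmin_on_subset)
  moreover have "x \<in> argmin_on g S"
    using x unfolding argmin_on_def by auto
  ultimately show ?thesis by auto
qed

definition convex_tradeoff :: "(real \<Rightarrow> real) \<Rightarrow> (real \<Rightarrow> real) \<Rightarrow> bool" where
  "convex_tradeoff b l \<longleftrightarrow> (\<forall>x\<in>{0..1}. \<forall>y\<in>{0..1}. \<forall>t\<in>{0..1}. \<exists>s\<in>{0..1}.
      b s = (1 - t) * b x + t * b y \<and> l s \<le> (1 - t) * l x + t * l y)"

lemma convex_tradeoff_exchange:
  assumes "convex_tradeoff b l" "x \<in> {0..1}" "y \<in> {0..1}" "0 \<le> d" "d \<le> b y - b x"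
  shows "\<exists>s\<in>{0..1}. \<exists>s'\<in>{0..1}. b s = b x + d \<and> b s' = b y - d \<and> l s + l s' \<le> l x + l y"
proof (cases "b y = b x")
  case True
  with assms show ?thesis by force
next
  case False
  define t where "t = d / (b y - b x)"
  have "b x < b y" using assms False by auto
  then have t: "t \<in> {0..1}" "t * (b y - b x) = d"
    using assms unfolding t_def by auto
  obtain s where s: "s \<in> {0..1}" "b s = (1 - t) * b x + t * b y" "l s \<le> (1 - t) * l x + t * l y"
    using assms(1-3) t(1) unfolding convex_tradeoff_def by blast
  have "1 - t \<in> {0..1}"
    using t(1) by simp
  then obtain s' where s': "s' \<in> {0..1}" "b s' = (1 - (1 - t)) * b x + (1 - t) * b y"
      "l s' \<le> (1 - (1 - t)) * l x + (1 - t) * l y"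
    using assms(1-3) unfolding convex_tradeoff_def by blast
  have "b s = b x + d" "b s' = b y - d"
    using s(2) s'(2) t(2) by (simp_all add: algebra_simps)
  moreover have "l s + l s' \<le> l x + l y"
    using s(3) s'(3) by (simp add: algebra_simps)
  ultimately show ?thesis using s(1) s'(1) by blast
qed

lemma segment_exits_band:
  fixes u v \<beta> :: real
  assumes "0 < \<beta>" "\<bar>u\<bar> \<le> \<beta>" "\<beta> < \<bar>v\<bar>"
    and exits: "\<And>t. 0 < t \<Longrightarrow> t \<le> 1 \<Longrightarrow> \<beta> < \<bar>(1 - t) * u + t * v\<bar>"
  shows "0 < u \<and> u < v \<or> v < u \<and> u < 0"
proof -
  have u: "\<bar>u\<bar> = \<beta>"
  proof (rule ccontr)
    assume "\<bar>u\<bar> \<noteq> \<beta>"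
    define t where "t = (\<beta> - \<bar>u\<bar>) / \<bar>v\<bar>"
    have t: "0 < t" "t \<le> 1" "t * \<bar>v\<bar> = \<beta> - \<bar>u\<bar>"
      using \<open>\<bar>u\<bar> \<noteq> \<beta>\<close> assms(2,3) unfolding t_def by auto
    have "\<bar>(1 - t) * u + t * v\<bar> \<le> (1 - t) * \<bar>u\<bar> + t * \<bar>v\<bar>"
      using t abs_triangle_ineq[of "(1 - t) * u" "t * v"] by (simp add: abs_mult)
    also have "\<dots> \<le> \<beta>"
      using t by (simp add: algebra_simps)
    finally show False
      using exits t by fastforce
  qed
  have "0 < u * v"
  proof (rule ccontr)
    assume "\<not> 0 < u * v"
    moreover have "u \<noteq> 0"
      using u assms(1) by auto
    ultimately have opposite: "0 < u * (u - v)"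
      by (smt (verit) mult_le_0_iff right_diff_distrib zero_less_mult_iff)
    define t where "t = u / (u - v)"
    have "0 < t"
      using opposite unfolding t_def by (simp add: zero_less_divide_iff zero_less_mult_iff)
    moreover have "t \<le> 1"
      using \<open>\<not> 0 < u * v\<close> unfolding t_def by (smt (verit) divide_le_eq_1 mult_le_0_iff)
    moreover have "u - v \<noteq> 0"
      using opposite by auto
    then have "(1 - t) * u + t * v = 0"
      unfolding t_def by (simp add: field_simps)
    ultimately show False
      using exits assms(1) by fastforce
  qed
  then show ?thesis
    using u assms(3) by (auto simp: zero_less_mult_iff)
qed

definition monotone_triple :: "real \<Rightarrow> real \<Rightarrow> real \<Rightarrow> bool" where
  "monotone_triple u v w \<longleftrightarrow> u \<le> v \<and> v \<le> w \<or> u \<ge> v \<and> v \<ge> w"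

lemma slack_consistent_iff:
  "slack_consistent F \<longleftrightarrow> (\<forall>x a \<beta>1 \<beta>2 \<beta>3. a \<in> {1, 2} \<and> 0 < \<beta>1 \<and> \<beta>1 < \<beta>2 \<and> \<beta>2 < \<beta>3
    \<longrightarrow> monotone_triple (F \<beta>1 x a) (F \<beta>2 x a) (F \<beta>3 x a))"
  unfolding slack_consistent_def monotone_triple_def ..

lemma monotone_triple_antitone:
  assumes "monotone_triple u v w" "u \<in> A" "v \<in> A" "w \<in> A"
    and "\<And>x y. x \<in> A \<Longrightarrow> y \<in> A \<Longrightarrow> x \<le> y \<Longrightarrow> f y \<le> f x"
  shows "monotone_triple (f u) (f v) (f w)"
  using assms unfolding monotone_triple_def by blast

(* b1, b2 and l1, l2 are the positive rates and the loss shares of the two groups as functions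
   of their normalized thresholds; select is the post-processing choice pp_select. *)
locale two_group_tradeoff =
  fixes b1 b2 l1 l2 :: "real \<Rightarrow> real"
  assumes continuity: "continuous_on {0..1} b1" "continuous_on {0..1} b2"
      "continuous_on {0..1} l1" "continuous_on {0..1} l2"
    and antitone1: "\<And>x y. x \<in> {0..1} \<Longrightarrow> y \<in> {0..1} \<Longrightarrow> x \<le> y \<Longrightarrow> b1 y \<le> b1 x"
    and antitone2: "\<And>x y. x \<in> {0..1} \<Longrightarrow> y \<in> {0..1} \<Longrightarrow> x \<le> y \<Longrightarrow> b2 y \<le> b2 x"
    and convexity: "convex_tradeoff b1 l1" "convex_tradeoff b2 l2"
    and injectivity: "inj_on (\<lambda>\<tau>. (b1 \<tau>, l1 \<tau>)) {0..1}" "inj_on (\<lambda>\<tau>. (b2 \<tau>, l2 \<tau>)) {0..1}"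
    and same_start: "b1 0 = b2 0"
begin

definition disparity :: "real \<times> real \<Rightarrow> real" where
  "disparity \<tau> = b1 (fst \<tau>) - b2 (snd \<tau>)"

definition loss :: "real \<times> real \<Rightarrow> real" where
  "loss \<tau> = l1 (fst \<tau>) + l2 (snd \<tau>)"

definition admissible :: "real \<Rightarrow> (real \<times> real) set" where
  "admissible \<beta> = {\<tau> \<in> {0..1} \<times> {0..1}. \<bar>disparity \<tau>\<bar> \<le> \<beta>}"

definition lexmin :: "(real \<times> real) set \<Rightarrow> (real \<times> real) set" where
  "lexmin S = argmin_on snd (argmin_on fst (argmin_on (\<lambda>\<tau>. \<bar>disparity \<tau>\<bar>) (argmin_on loss S)))"

definition select :: "real \<Rightarrow> real \<times> real" where
  "select \<beta> = (THE \<tau>. \<tau> \<in> lexmin (admissible \<beta>))"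

lemma continuous_disparity: "continuous_on ({0..1} \<times> {0..1}) disparity"
  unfolding disparity_def
  by (intro continuous_intros continuous_on_compose2[OF continuity(1)]
      continuous_on_compose2[OF continuity(2)]) auto

lemma continuous_loss: "continuous_on ({0..1} \<times> {0..1}) loss"
  unfolding loss_def
  by (intro continuous_intros continuous_on_compose2[OF continuity(3)]
      continuous_on_compose2[OF continuity(4)]) auto

lemma lexminD:
  assumes "x \<in> lexmin S"
  shows lexmin_mem: "x \<in> S"
    and lexmin_loss_le: "\<And>y. y \<in> S \<Longrightarrow> loss x \<le> loss y"
    and lexmin_abs_disparity_le: "\<And>y. y \<in> S \<Longrightarrow> loss y \<le> loss x \<Longrightarrow> \<bar>disparity x\<bar> \<le> \<bar>disparity y\<bar>"
    and lexmin_fst_le: "\<And>y. y \<in> S \<Longrightarrow> loss y \<le> loss x \<Longrightarrow> \<bar>disparity y\<bar> \<le> \<bar>disparity x\<bar>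
      \<Longrightarrow> fst x \<le> fst y"
    and lexmin_snd_le: "\<And>y. y \<in> S \<Longrightarrow> loss y \<le> loss x \<Longrightarrow> \<bar>disparity y\<bar> \<le> \<bar>disparity x\<bar>
      \<Longrightarrow> fst y \<le> fst x \<Longrightarrow> snd x \<le> snd y"
proof -
  let ?A1 = "argmin_on loss S"
  let ?A2 = "argmin_on (\<lambda>\<tau>. \<bar>disparity \<tau>\<bar>) ?A1"
  let ?A3 = "argmin_on fst ?A2"
  have x4: "x \<in> argmin_on snd ?A3"
    using assms unfolding lexmin_def .
  then have x3: "x \<in> ?A3"
    using argmin_on_subset by fast
  then have x2: "x \<in> ?A2"
    using argmin_on_subset by fast
  then have x1: "x \<in> ?A1"
    using argmin_on_subset by fast
  then show "x \<in> S" "\<And>y. y \<in> S \<Longrightarrow> loss x \<le> loss y"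
    using argmin_on_subset argmin_on_le by fast+
  have y1: "y \<in> ?A1" if "y \<in> S" "loss y \<le> loss x" for y
    using argmin_on_tie[OF x1 that] .
  show "\<bar>disparity x\<bar> \<le> \<bar>disparity y\<bar>" if "y \<in> S" "loss y \<le> loss x" for y
    using argmin_on_le[OF x2 y1[OF that]] by simp
  have y2: "y \<in> ?A2" if "y \<in> S" "loss y \<le> loss x" "\<bar>disparity y\<bar> \<le> \<bar>disparity x\<bar>" for y
    using argmin_on_tie[OF x2 y1[OF that(1,2)]] that(3) by simp
  show "fst x \<le> fst y" if "y \<in> S" "loss y \<le> loss x" "\<bar>disparity y\<bar> \<le> \<bar>disparity x\<bar>" for y
    using argmin_on_le[OF x3 y2[OF that]] .
  show "snd x \<le> snd y"
    if "y \<in> S" "loss y \<le> loss x" "\<bar>disparity y\<bar> \<le> \<bar>disparity x\<bar>" "fst y \<le> fst x" for y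
    using argmin_on_le[OF x4 argmin_on_tie[OF x3 y2[OF that(1-3)] that(4)]] .
qed

lemma lexmin_unique:
  assumes "x \<in> lexmin S" "y \<in> lexmin T" "x \<in> T" "y \<in> S"
  shows "x = y"
proof -
  have "loss x = loss y"
    using lexmin_loss_le assms by (meson order_antisym)
  moreover have "\<bar>disparity x\<bar> = \<bar>disparity y\<bar>"
    using lexmin_abs_disparity_le assms calculation by (metis order_refl order_antisym)
  moreover have "fst x = fst y"
    using lexmin_fst_le assms calculation by (metis order_refl order_antisym)
  moreover have "snd x = snd y"
    using lexmin_snd_le assms calculation by (metis order_refl order_antisym)
  ultimately show ?thesis
    by (simp add: prod_eq_iff)
qed

lemma compact_admissible: "compact (admissible \<beta>)"
proof -
  let ?square = "{0..1} \<times> {0..1} :: (real \<times> real) set"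
  have square: "compact ?square"
    by (intro compact_Times) auto
  have "closed (?square \<inter> (\<lambda>\<tau>. \<bar>disparity \<tau>\<bar>) -` {..\<beta>})"
    by (rule continuous_closed_preimage[OF continuous_on_rabs[OF continuous_disparity]
          compact_imp_closed[OF square]]) simp
  from compact_Int_closed[OF square this]
  have "compact (?square \<inter> (\<lambda>\<tau>. \<bar>disparity \<tau>\<bar>) -` {..\<beta>})"
    by (simp only: Int_left_absorb)
  moreover have "admissible \<beta> = ?square \<inter> (\<lambda>\<tau>. \<bar>disparity \<tau>\<bar>) -` {..\<beta>}"
    unfolding admissible_def by auto
  ultimately show ?thesis
    by simp
qed

lemma lexmin_singleton:
  assumes "compact S" "S \<noteq> {}" "S \<subseteq> {0..1} \<times> {0..1}"
  shows "\<exists>!\<tau>. \<tau> \<in> lexmin S"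
proof -
  let ?A1 = "argmin_on loss S"
  let ?A2 = "argmin_on (\<lambda>\<tau>. \<bar>disparity \<tau>\<bar>) ?A1"
  let ?A3 = "argmin_on fst ?A2"
  have A1: "compact ?A1 \<and> ?A1 \<noteq> {}"
    by (rule argmin_on_compact[OF assms(1,2) continuous_on_subset[OF continuous_loss assms(3)]])
  have "?A1 \<subseteq> {0..1} \<times> {0..1}"
    by (rule subset_trans[OF argmin_on_subset assms(3)])
  then have A2: "compact ?A2 \<and> ?A2 \<noteq> {}"
    using A1 argmin_on_compact continuous_on_rabs continuous_on_subset[OF continuous_disparity]
    by metis
  then have "compact ?A3 \<and> ?A3 \<noteq> {}"
    using argmin_on_compact continuous_on_fst[OF continuous_on_id] by metis
  then have "lexmin S \<noteq> {}"
    unfolding lexmin_def using argmin_on_compact continuous_on_snd[OF continuous_on_id] by metis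
  then show ?thesis
    using lexmin_unique lexmin_mem by blast
qed

lemma origin_admissible: "0 \<le> \<beta> \<Longrightarrow> (0, 0) \<in> admissible \<beta>"
  unfolding admissible_def disparity_def by (simp add: same_start)

lemma select_lexmin:
  assumes "0 \<le> \<beta>"
  shows "select \<beta> \<in> lexmin (admissible \<beta>)"
proof -
  have "admissible \<beta> \<noteq> {}" "admissible \<beta> \<subseteq> {0..1} \<times> {0..1}"
    using origin_admissible[OF assms] unfolding admissible_def by blast+
  then show ?thesis
    unfolding select_def using theI'[OF lexmin_singleton[OF compact_admissible]] by blast
qed

lemma select_admissible: "0 \<le> \<beta> \<Longrightarrow> select \<beta> \<in> admissible \<beta>"
  by (rule lexmin_mem[OF select_lexmin])

lemma select_square: "0 \<le> \<beta> \<Longrightarrow> select \<beta> \<in> {0..1} \<times> {0..1}"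
  using select_admissible unfolding admissible_def by blast

lemma admissible_mono: "\<beta> \<le> \<beta>' \<Longrightarrow> admissible \<beta> \<subseteq> admissible \<beta>'"
  unfolding admissible_def by auto

lemma select_eq_if_admissible:
  assumes "0 \<le> \<beta>" "\<beta> \<le> \<beta>'" "select \<beta>' \<in> admissible \<beta>"
  shows "select \<beta> = select \<beta>'"
proof (rule lexmin_unique[OF select_lexmin select_lexmin])
  show "select \<beta> \<in> admissible \<beta>'"
    using select_admissible[OF assms(1)] admissible_mono[OF assms(2)] by blast
qed (use assms in auto)

lemma mixture_attainable:
  assumes "X \<in> {0..1} \<times> {0..1}" "Y \<in> {0..1} \<times> {0..1}" "t \<in> {0..1}"
  obtains Z where "Z \<in> {0..1} \<times> {0..1}"
    "disparity Z = (1 - t) * disparity X + t * disparity Y"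
    "loss Z \<le> (1 - t) * loss X + t * loss Y"
proof -
  have "fst X \<in> {0..1}" "snd X \<in> {0..1}" "fst Y \<in> {0..1}" "snd Y \<in> {0..1}"
    using assms(1,2) by (simp_all add: mem_Times_iff)
  then obtain s1 s2 where
      s1: "s1 \<in> {0..1}" "b1 s1 = (1 - t) * b1 (fst X) + t * b1 (fst Y)"
        "l1 s1 \<le> (1 - t) * l1 (fst X) + t * l1 (fst Y)" and
      s2: "s2 \<in> {0..1}" "b2 s2 = (1 - t) * b2 (snd X) + t * b2 (snd Y)"
        "l2 s2 \<le> (1 - t) * l2 (snd X) + t * l2 (snd Y)"
    using convexity assms(3) unfolding convex_tradeoff_def by metis
  show ?thesis
    by (rule that[of "(s1, s2)"]) (use s1 s2 in \<open>auto simp: disparity_def loss_def algebra_simps\<close>)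
qed

lemma select_mixture_inadmissible:
  assumes "0 \<le> \<beta>" "Y \<in> {0..1} \<times> {0..1}" "loss Y < loss (select \<beta>)" "0 < t" "t \<le> 1"
  shows "\<beta> < \<bar>(1 - t) * disparity (select \<beta>) + t * disparity Y\<bar>"
proof (rule ccontr)
  assume "\<not> ?thesis"
  moreover have "t \<in> {0..1}"
    using assms(4,5) by simp
  then obtain Z where Z: "Z \<in> {0..1} \<times> {0..1}"
      "disparity Z = (1 - t) * disparity (select \<beta>) + t * disparity Y"
      "loss Z \<le> (1 - t) * loss (select \<beta>) + t * loss Y"
    using mixture_attainable[OF select_square[OF assms(1)] assms(2)] by blast
  ultimately have "Z \<in> admissible \<beta>"
    unfolding admissible_def by simp
  then have "loss (select \<beta>) \<le> (1 - t) * loss (select \<beta>) + t * loss Y"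
    using lexmin_loss_le[OF select_lexmin[OF assms(1)]] Z(3) by fastforce
  then have "t * loss (select \<beta>) \<le> t * loss Y"
    by (simp add: algebra_simps)
  with assms(3,4) show False
    by simp
qed

lemma select_change:
  assumes "0 \<le> \<beta>" "\<beta> \<le> \<beta>'" "select \<beta> \<noteq> select \<beta>'"
  shows "\<beta> < \<bar>disparity (select \<beta>')\<bar>" and "loss (select \<beta>') < loss (select \<beta>)"
proof -
  have X: "select \<beta> \<in> admissible \<beta>'" and Y: "select \<beta>' \<in> admissible \<beta>'"
    using select_admissible assms(1,2) admissible_mono[OF assms(2)] by auto
  have "select \<beta>' \<notin> admissible \<beta>"
    using select_eq_if_admissible assms by blast
  with Y show far: "\<beta> < \<bar>disparity (select \<beta>')\<bar>"
    unfolding admissible_def by auto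
  show "loss (select \<beta>') < loss (select \<beta>)"
  proof (rule ccontr)
    assume "\<not> ?thesis"
    then have "\<bar>disparity (select \<beta>')\<bar> \<le> \<bar>disparity (select \<beta>)\<bar>"
      using lexmin_abs_disparity_le[OF select_lexmin X] assms(1,2) by fastforce
    with far select_admissible[OF assms(1)] show False
      unfolding admissible_def by auto
  qed
qed

lemma select_step:
  assumes "0 < \<beta>" "\<beta> < \<beta>'" "select \<beta> \<noteq> select \<beta>'"
  shows "0 < disparity (select \<beta>) \<and> disparity (select \<beta>) < disparity (select \<beta>')
    \<or> disparity (select \<beta>') < disparity (select \<beta>) \<and> disparity (select \<beta>) < 0"
proof (rule segment_exits_band[OF assms(1)])
  show "\<bar>disparity (select \<beta>)\<bar> \<le> \<beta>"
    using select_admissible assms(1) unfolding admissible_def by auto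
  show "\<beta> < \<bar>disparity (select \<beta>')\<bar>"
    using select_change(1) assms by simp
  show "\<beta> < \<bar>(1 - t) * disparity (select \<beta>) + t * disparity (select \<beta>')\<bar>" if "0 < t" "t \<le> 1" for t
    using select_mixture_inadmissible[OF _ select_square select_change(2) that] assms by simp
qed

lemma select_exchange:
  assumes "0 \<le> \<beta>" "0 \<le> \<beta>'" "X \<in> {0..1} \<times> {0..1}" "Y \<in> {0..1} \<times> {0..1}"
    and "disparity X = disparity (select \<beta>)" "disparity Y = disparity (select \<beta>')"
    and "loss X + loss Y \<le> loss (select \<beta>) + loss (select \<beta>')"
  shows "fst (select \<beta>) \<le> fst X" and "fst (select \<beta>') \<le> fst Y"
proof -
  have X: "X \<in> admissible \<beta>" and Y: "Y \<in> admissible \<beta>'"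
    using assms select_admissible unfolding admissible_def by auto
  have "loss (select \<beta>) \<le> loss X" "loss (select \<beta>') \<le> loss Y"
    using lexmin_loss_le[OF select_lexmin] X Y assms(1,2) by auto
  then show "fst (select \<beta>) \<le> fst X" "fst (select \<beta>') \<le> fst Y"
    using lexmin_fst_le[OF select_lexmin] X Y assms by fastforce+
qed

(* Otherwise swap the first thresholds of the two selections and compensate the rate difference
   within group 2: both disparities are kept, the total loss does not grow, and select \<beta>' loses
   its tie-break on the first threshold. *)
lemma select_rate1_mono:
  assumes "0 \<le> \<beta>" "0 \<le> \<beta>'" "disparity (select \<beta>) \<le> disparity (select \<beta>')"
  shows "b1 (fst (select \<beta>)) \<le> b1 (fst (select \<beta>'))"
proof (rule ccontr)
  obtain p1 p2 q1 q2 where P: "select \<beta> = (p1, p2)" and Q: "select \<beta>' = (q1, q2)"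
    by fastforce
  have pq: "p1 \<in> {0..1}" "p2 \<in> {0..1}" "q1 \<in> {0..1}" "q2 \<in> {0..1}"
    using select_square[OF assms(1)] select_square[OF assms(2)] P Q by auto
  assume "\<not> ?thesis"
  then have d: "0 < b1 p1 - b1 q1"
    using P Q by simp
  moreover have "b1 p1 - b1 q1 \<le> b2 p2 - b2 q2"
    using assms(3) P Q unfolding disparity_def by simp
  ultimately obtain s s' where s: "s \<in> {0..1}" "s' \<in> {0..1}" "b2 s = b2 q2 + (b1 p1 - b1 q1)"
      "b2 s' = b2 p2 - (b1 p1 - b1 q1)" "l2 s + l2 s' \<le> l2 q2 + l2 p2"
    using convex_tradeoff_exchange[OF convexity(2) pq(4,2), of "b1 p1 - b1 q1"] by auto
  have "fst (select \<beta>') \<le> fst (p1, s)"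
    by (rule select_exchange(2)[OF assms(1,2), of "(q1, s')"])
      (use P Q pq s in \<open>auto simp: disparity_def loss_def\<close>)
  then show False
    using Q antitone1[OF pq(3,1)] d by simp
qed

lemma select_rate2_mono:
  assumes "0 \<le> \<beta>" "0 \<le> \<beta>'" "disparity (select \<beta>) \<le> disparity (select \<beta>')"
  shows "b2 (snd (select \<beta>')) \<le> b2 (snd (select \<beta>))"
proof (rule ccontr)
  obtain p1 p2 q1 q2 where P: "select \<beta> = (p1, p2)" and Q: "select \<beta>' = (q1, q2)"
    by fastforce
  have pq: "p1 \<in> {0..1}" "p2 \<in> {0..1}" "q1 \<in> {0..1}" "q2 \<in> {0..1}"
    using select_square[OF assms(1)] select_square[OF assms(2)] P Q by auto
  assume "\<not> ?thesis"
  then have d: "0 < b2 q2 - b2 p2"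
    using P Q by simp
  moreover have "b2 q2 - b2 p2 \<le> b1 q1 - b1 p1"
    using assms(3) P Q unfolding disparity_def by simp
  ultimately obtain s s' where s: "s \<in> {0..1}" "s' \<in> {0..1}" "b1 s = b1 p1 + (b2 q2 - b2 p2)"
      "b1 s' = b1 q1 - (b2 q2 - b2 p2)" "l1 s + l1 s' \<le> l1 p1 + l1 q1"
    using convex_tradeoff_exchange[OF convexity(1) pq(1,3), of "b2 q2 - b2 p2"] by auto
  have "fst (select \<beta>) \<le> fst (s, q2)"
    by (rule select_exchange(1)[OF assms(1,2), of _ "(s', p2)"])
      (use P Q pq s in \<open>auto simp: disparity_def loss_def\<close>)
  then show False
    using P antitone1[OF pq(1) s(1)] d s(3) by simp
qed

lemma select_coords_eq:
  assumes "0 \<le> \<beta>" "0 \<le> \<beta>'"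
  shows "b1 (fst (select \<beta>)) = b1 (fst (select \<beta>')) \<Longrightarrow> fst (select \<beta>) = fst (select \<beta>')"
    and "b2 (snd (select \<beta>)) = b2 (snd (select \<beta>')) \<Longrightarrow> snd (select \<beta>) = snd (select \<beta>')"
proof -
  obtain p1 p2 q1 q2 where P: "select \<beta> = (p1, p2)" and Q: "select \<beta>' = (q1, q2)"
    by fastforce
  have pq: "p1 \<in> {0..1}" "p2 \<in> {0..1}" "q1 \<in> {0..1}" "q2 \<in> {0..1}"
    using select_square[OF assms(1)] select_square[OF assms(2)] P Q by auto
  have adm: "\<And>\<tau>. \<tau> \<in> {0..1} \<times> {0..1} \<Longrightarrow> disparity \<tau> = disparity (select \<beta>) \<Longrightarrow> \<tau> \<in> admissible \<beta>"
      "\<And>\<tau>. \<tau> \<in> {0..1} \<times> {0..1} \<Longrightarrow> disparity \<tau> = disparity (select \<beta>') \<Longrightarrow> \<tau> \<in> admissible \<beta>'"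
    using select_admissible assms unfolding admissible_def by auto
  note le = lexmin_loss_le[OF select_lexmin[OF assms(1)]]
    lexmin_loss_le[OF select_lexmin[OF assms(2)]]
  show "fst (select \<beta>) = fst (select \<beta>')" if "b1 (fst (select \<beta>)) = b1 (fst (select \<beta>'))"
  proof -
    have "l1 p1 \<le> l1 q1" "l1 q1 \<le> l1 p1"
      using le(1)[OF adm(1), of "(q1, p2)"] le(2)[OF adm(2), of "(p1, q2)"] that P Q pq
      by (auto simp: disparity_def loss_def)
    then show ?thesis
      using inj_onD[OF injectivity(1), of p1 q1] that P Q pq by auto
  qed
  show "snd (select \<beta>) = snd (select \<beta>')" if "b2 (snd (select \<beta>)) = b2 (snd (select \<beta>'))"
  proof -
    have "l2 p2 \<le> l2 q2" "l2 q2 \<le> l2 p2"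
      using le(1)[OF adm(1), of "(p1, q2)"] le(2)[OF adm(2), of "(q1, p2)"] that P Q pq
      by (auto simp: disparity_def loss_def)
    then show ?thesis
      using inj_onD[OF injectivity(2), of p2 q2] that P Q pq by auto
  qed
qed

lemma select_thresholds_mono:
  assumes "0 \<le> \<beta>" "0 \<le> \<beta>'" "disparity (select \<beta>) \<le> disparity (select \<beta>')"
  shows "fst (select \<beta>') \<le> fst (select \<beta>)" and "snd (select \<beta>) \<le> snd (select \<beta>')"
proof -
  have sq: "fst (select \<beta>) \<in> {0..1}" "snd (select \<beta>) \<in> {0..1}"
      "fst (select \<beta>') \<in> {0..1}" "snd (select \<beta>') \<in> {0..1}"
    using select_square assms(1,2) by (auto simp: mem_Times_iff)
  show "fst (select \<beta>') \<le> fst (select \<beta>)"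
    using select_rate1_mono[OF assms] select_coords_eq(1)[OF assms(1,2)] antitone1[OF sq(1,3)]
    by fastforce
  show "snd (select \<beta>) \<le> snd (select \<beta>')"
    using select_rate2_mono[OF assms] select_coords_eq(2)[OF assms(1,2)] antitone2[OF sq(4,2)]
    by fastforce
qed

lemma select_disparity_between:
  assumes "0 < \<beta>1" "\<beta>1 < \<beta>2" "\<beta>2 < \<beta>3"
  shows "monotone_triple (disparity (select \<beta>1)) (disparity (select \<beta>2)) (disparity (select \<beta>3))"
proof (cases "select \<beta>1 = select \<beta>2 \<or> select \<beta>2 = select \<beta>3")
  case True
  then show ?thesis
    unfolding monotone_triple_def by auto
next
  case False
  then show ?thesis
    using select_step[OF assms(1,2)] select_step[of \<beta>2 \<beta>3] assms
    unfolding monotone_triple_def by auto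
qed

theorem select_between:
  assumes "0 < \<beta>1" "\<beta>1 < \<beta>2" "\<beta>2 < \<beta>3"
  shows "monotone_triple (fst (select \<beta>1)) (fst (select \<beta>2)) (fst (select \<beta>3))"
    and "monotone_triple (snd (select \<beta>1)) (snd (select \<beta>2)) (snd (select \<beta>3))"
  using select_disparity_between[OF assms] select_thresholds_mono[of \<beta>1 \<beta>2]
    select_thresholds_mono[of \<beta>2 \<beta>1] select_thresholds_mono[of \<beta>2 \<beta>3]
    select_thresholds_mono[of \<beta>3 \<beta>2] assms
  unfolding monotone_triple_def by auto

end

section \<open>Randomized threshold classifiers\<close>

lemma thr_clf_bounds: "0 \<le> p \<Longrightarrow> p \<le> 1 \<Longrightarrow> 0 \<le> thr_clf t p x \<and> thr_clf t p x \<le> 1"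
  unfolding thr_clf_def by auto

lemma sum_thr_clf:
  assumes "finite I"
  shows "(\<Sum>i\<in>I. thr_clf t p (s i)) = real (card {i\<in>I. t < s i}) + p * real (card {i\<in>I. s i = t})"
proof -
  have "(\<Sum>i\<in>I. thr_clf t p (s i)) = (\<Sum>i\<in>I. (if t < s i then 1 else 0) + (if s i = t then p else 0))"
    unfolding thr_clf_def by (rule sum.cong) auto
  also have "\<dots> = real (card {i\<in>I. t < s i}) + p * real (card {i\<in>I. s i = t})"
    using assms by (simp add: sum.distrib sum.inter_filter[symmetric])
  finally show ?thesis .
qed

lemma threshold_between_counts:
  fixes s :: "'i \<Rightarrow> real" and q :: real
  assumes "finite I" "I \<noteq> {}" "0 \<le> q" "q \<le> card I"
  shows "\<exists>t\<in>s ` I. card {i\<in>I. t < s i} \<le> q \<and> q \<le> card {i\<in>I. t \<le> s i}"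
proof -
  define T where "T = {v \<in> s ` I. card {i\<in>I. v < s i} \<le> q}"
  have fin: "finite (s ` I)" "finite T"
    using assms(1) unfolding T_def by auto
  have none_above: "{i\<in>I. Max (s ` I) < s i} = {}"
    using Max_ge[OF fin(1)] by fastforce
  have "Max (s ` I) \<in> T"
    using Max_in[OF fin(1)] assms(2,3) unfolding T_def mem_Collect_eq none_above by simp
  define t where "t = Min T"
  then have t: "t \<in> T" "\<And>v. v \<in> T \<Longrightarrow> t \<le> v"
    using Min_in[OF fin(2)] Min_le[OF fin(2)] \<open>Max (s ` I) \<in> T\<close> by blast+
  have "q \<le> card {i\<in>I. t \<le> s i}"
  proof (cases "\<exists>v\<in>s ` I. v < t")
    case True
    define t' where "t' = Max {v \<in> s ` I. v < t}"
    have t': "t' \<in> s ` I" "t' < t" "\<And>v. v \<in> s ` I \<Longrightarrow> v < t \<Longrightarrow> v \<le> t'"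
      using Max_in[of "{v \<in> s ` I. v < t}"] Max_ge[of "{v \<in> s ` I. v < t}"] fin(1) True
      unfolding t'_def by auto
    then have "t' \<notin> T"
      using t(2) by force
    then have "q < card {i\<in>I. t' < s i}"
      using t'(1) unfolding T_def by auto
    moreover have "{i\<in>I. t' < s i} = {i\<in>I. t \<le> s i}"
      using t' by force
    ultimately show ?thesis
      by simp
  next
    case False
    then have "{i\<in>I. t \<le> s i} = I"
      by force
    then show ?thesis
      using assms(4) by simp
  qed
  with t(1) show ?thesis
    unfolding T_def by blast
qed

lemma thr_clf_rate_exists:
  fixes s :: "'i \<Rightarrow> real" and q :: real
  assumes "finite I" "I \<noteq> {}" "0 \<le> q" "q \<le> card I"
  shows "\<exists>t\<in>s ` I. \<exists>p. 0 \<le> p \<and> p \<le> 1 \<and> (\<Sum>i\<in>I. thr_clf t p (s i)) = q"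
proof -
  obtain t where t: "t \<in> s ` I" "card {i\<in>I. t < s i} \<le> q" "q \<le> card {i\<in>I. t \<le> s i}"
    using threshold_between_counts[OF assms] by blast
  then have at_t: "0 < card {i\<in>I. s i = t}"
    using assms(1) by (auto simp: card_gt_0_iff)
  have split: "card {i\<in>I. t \<le> s i} = card {i\<in>I. t < s i} + card {i\<in>I. s i = t}"
    using assms(1) by (subst card_Un_disjoint[symmetric]) (auto intro: arg_cong[where f = card])
  define p where "p = (q - card {i\<in>I. t < s i}) / card {i\<in>I. s i = t}"
  have "0 \<le> p" "p \<le> 1"
    using t(2,3) at_t split unfolding p_def by (auto simp: divide_le_eq_1)
  moreover have "(\<Sum>i\<in>I. thr_clf t p (s i)) = q"
    using at_t unfolding sum_thr_clf[OF assms(1)] p_def by simp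
  ultimately show ?thesis
    using t(1) by blast
qed

lemma thr_clf_le_if_less:
  assumes "0 \<le> p" "p \<le> 1" "0 \<le> p'" "p' \<le> 1" "thr_clf t p x0 < thr_clf t' p' x0"
  shows "thr_clf t p x \<le> thr_clf t' p' x"
proof -
  have "x0 \<le> t" "t' \<le> x0"
    using assms unfolding thr_clf_def by (auto split: if_splits)
  then show ?thesis
    using assms unfolding thr_clf_def by (auto split: if_splits)
qed

lemma thr_clf_le_if_sum_le:
  assumes "finite I" "i \<in> I" "0 \<le> p" "p \<le> 1" "0 \<le> p'" "p' \<le> 1"
    and "(\<Sum>j\<in>I. thr_clf t' p' (s j)) \<le> (\<Sum>j\<in>I. thr_clf t p (s j))"
  shows "thr_clf t' p' (s i) \<le> thr_clf t p (s i)"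
proof (rule ccontr)
  assume "\<not> ?thesis"
  then have lt: "thr_clf t p (s i) < thr_clf t' p' (s i)"
    by simp
  then have "(\<Sum>j\<in>I. thr_clf t p (s j)) < (\<Sum>j\<in>I. thr_clf t' p' (s j))"
    using thr_clf_le_if_less[OF assms(3-6) lt] assms(2)
    by (intro sum_strict_mono_ex1[OF assms(1)]) auto
  with assms(7) show False
    by simp
qed

lemma thr_clf_maximizes_weighted_sum:
  assumes "finite I" "\<And>i. i \<in> I \<Longrightarrow> 0 \<le> w i \<and> w i \<le> 1"
    and "(\<Sum>i\<in>I. w i) = (\<Sum>i\<in>I. thr_clf t p (s i))"
  shows "(\<Sum>i\<in>I. s i * w i) \<le> (\<Sum>i\<in>I. s i * thr_clf t p (s i))"
proof -
  let ?h = "\<lambda>i. thr_clf t p (s i)"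
  have "0 \<le> (s i - t) * (?h i - w i)" if "i \<in> I" for i
    using assms(2)[OF that] unfolding thr_clf_def by (auto intro: mult_nonpos_nonneg)
  then have "0 \<le> (\<Sum>i\<in>I. (s i - t) * (?h i - w i))"
    by (rule sum_nonneg)
  also have "\<dots> = (\<Sum>i\<in>I. (s i * ?h i - s i * w i) - t * (?h i - w i))"
    by (simp add: algebra_simps)
  also have "\<dots> = (\<Sum>i\<in>I. s i * ?h i) - (\<Sum>i\<in>I. s i * w i) - t * ((\<Sum>i\<in>I. ?h i) - (\<Sum>i\<in>I. w i))"
    by (simp add: sum_subtractf sum_distrib_left[symmetric])
  finally show ?thesis
    using assms(3) by simp
qed

section \<open>GABOS scores and post-processing\<close>

locale gabos_setting =
  fixes D :: "'x dataset" and c :: "nat \<Rightarrow> 'x \<Rightarrow> nat" and M :: "nat \<Rightarrow> nat" and k :: bias_kind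
  assumes labels: "\<forall>i<length D. as_of D i \<in> {1, 2} \<and> ys_of D i \<in> {0, 1}"
    and cells: "\<forall>j\<in>{1, 2}. \<forall>x. c j x \<in> {1..M j}"
    and cells_occupied: "\<forall>j\<in>{1, 2}. \<forall>m\<in>{1..M j}. \<exists>i\<in>grp D j. c j (xs_of D i) = m"
    and positives_exist: "k = EqOpp \<Longrightarrow> \<forall>j\<in>{1, 2}. \<exists>i\<in>grp D j. ys_of D i = 1"
begin

abbreviation data_score :: "nat \<Rightarrow> nat \<Rightarrow> real" where
  "data_score a i \<equiv> score D c (xs_of D i) a"

abbreviation thr :: "nat \<Rightarrow> real \<Rightarrow> real \<Rightarrow> real" where
  "thr a \<tau> \<equiv> norm_thr_clf D c a \<tau>"

abbreviation group_size :: "nat \<Rightarrow> real" where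
  "group_size a \<equiv> real (card (grp D a))"

lemma finite_grp: "finite (grp D a)"
  unfolding grp_def by auto

lemma score_attained:
  assumes "a \<in> {1, 2}"
  shows "\<exists>i\<in>grp D a. score D c x a = data_score a i"
proof -
  obtain i where "i \<in> grp D a" "c a (xs_of D i) = c a x"
    using cells cells_occupied assms by blast
  then show ?thesis
    unfolding score_def by metis
qed

lemma group_size_pos: "a \<in> {1, 2} \<Longrightarrow> 0 < group_size a"
  using score_attained finite_grp by (fastforce simp: card_gt_0_iff)

lemma thr_threshold:
  assumes "a \<in> {1, 2}" "\<tau> \<in> {0..1}"
  obtains t p where "0 \<le> p" "p \<le> 1" "thr a \<tau> = thr_clf t p"
    and "(\<Sum>i\<in>grp D a. thr a \<tau> (data_score a i)) = (1 - \<tau>) * group_size a"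
proof -
  have N: "0 < group_size a"
    by (rule group_size_pos[OF assms(1)])
  have "\<exists>t\<in>data_score a ` grp D a. \<exists>p. 0 \<le> p \<and> p \<le> 1
      \<and> (\<Sum>i\<in>grp D a. thr_clf t p (data_score a i)) = (1 - \<tau>) * group_size a"
    using assms(2) N by (intro thr_clf_rate_exists finite_grp) (auto simp: mult_le_cancel_right1)
  then obtain t p where tp: "t \<in> data_score a ` grp D a" "0 \<le> p" "p \<le> 1"
      "(\<Sum>i\<in>grp D a. thr_clf t p (data_score a i)) = (1 - \<tau>) * group_size a"
    by blast
  then have "pos_rate D c a (thr_clf t p) = 1 - \<tau>"
    using N unfolding pos_rate_def by simp
  with tp(1-3) have "\<exists>h. \<exists>t p. t \<in> data_score a ` grp D a \<and> 0 \<le> p \<and> p \<le> 1 \<and> h = thr_clf t p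
      \<and> pos_rate D c a h = 1 - \<tau>"
    by blast
  then have "\<exists>t p. 0 \<le> p \<and> p \<le> 1 \<and> thr a \<tau> = thr_clf t p \<and> pos_rate D c a (thr a \<tau>) = 1 - \<tau>"
    unfolding norm_thr_clf_def by (rule someI2_ex) blast
  then show ?thesis
    using that N unfolding pos_rate_def by (auto simp: field_simps)
qed

lemma thr_bounds: "a \<in> {1, 2} \<Longrightarrow> \<tau> \<in> {0..1} \<Longrightarrow> 0 \<le> thr a \<tau> s \<and> thr a \<tau> s \<le> 1"
  by (metis thr_threshold thr_clf_bounds)

lemma sum_thr:
  "a \<in> {1, 2} \<Longrightarrow> \<tau> \<in> {0..1} \<Longrightarrow> (\<Sum>i\<in>grp D a. thr a \<tau> (data_score a i)) = (1 - \<tau>) * group_size a"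
  by (metis thr_threshold)

lemma thr_antitone:
  assumes "a \<in> {1, 2}" "\<tau> \<in> {0..1}" "\<tau>' \<in> {0..1}" "\<tau> \<le> \<tau>'" "i \<in> grp D a"
  shows "thr a \<tau>' (data_score a i) \<le> thr a \<tau> (data_score a i)"
proof -
  obtain t p where tp: "0 \<le> p" "p \<le> 1" "thr a \<tau> = thr_clf t p"
    using thr_threshold[OF assms(1,2)] by metis
  obtain t' p' where tp': "0 \<le> p'" "p' \<le> 1" "thr a \<tau>' = thr_clf t' p'"
    using thr_threshold[OF assms(1,3)] by metis
  have "(\<Sum>i\<in>grp D a. thr a \<tau>' (data_score a i)) \<le> (\<Sum>i\<in>grp D a. thr a \<tau> (data_score a i))"
    using assms(4) group_size_pos[OF assms(1)]
    unfolding sum_thr[OF assms(1,2)] sum_thr[OF assms(1,3)] by (simp add: mult_right_mono)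
  then show ?thesis
    unfolding tp(3) tp'(3) by (rule thr_clf_le_if_sum_le[OF finite_grp assms(5) tp(1,2) tp'(1,2)])
qed

lemma thr_zero:
  assumes "a \<in> {1, 2}" "i \<in> grp D a"
  shows "thr a 0 (data_score a i) = 1"
proof -
  have "(\<Sum>j\<in>grp D a. 1 - thr a 0 (data_score a j)) = 0"
    using sum_thr[OF assms(1), of 0] by (simp add: sum_subtractf)
  then have "\<forall>j\<in>grp D a. 1 - thr a 0 (data_score a j) = 0"
    using thr_bounds[OF assms(1), of 0]
    by (subst sum_nonneg_eq_0_iff[OF finite_grp, symmetric]) auto
  then show ?thesis
    using assms(2) by simp
qed

(* The only place where the scores being cell frequencies matters. *)
lemma sum_labels_cell:
  assumes "{i \<in> grp D a. c a (xs_of D i) = m} \<noteq> {}"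
  shows "(\<Sum>i | i \<in> grp D a \<and> c a (xs_of D i) = m. if ys_of D i = 1 then f (data_score a i) else 0)
    = (\<Sum>i | i \<in> grp D a \<and> c a (xs_of D i) = m. data_score a i * f (data_score a i))"
proof -
  let ?C = "{i \<in> grp D a. c a (xs_of D i) = m}" and ?r = "cell_rate D c a m"
  have finite_cell: "finite ?C"
    using finite_grp by simp
  have cell_score: "data_score a i = ?r" if "i \<in> ?C" for i
    using that unfolding score_def by simp
  have "card ?C \<noteq> 0"
    using assms finite_cell by auto
  then have rate: "?r * card ?C = card {i \<in> ?C. ys_of D i = 1}"
    unfolding cell_rate_def by (simp add: conj_commute conj_left_commute)
  have "(\<Sum>i\<in>?C. if ys_of D i = 1 then f (data_score a i) else 0)
      = (\<Sum>i\<in>?C. if ys_of D i = 1 then f ?r else 0)"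
    using cell_score by (intro sum.cong) auto
  also have "\<dots> = (\<Sum>i\<in>{i \<in> ?C. ys_of D i = 1}. f ?r)"
    by (rule sum.inter_filter[symmetric, OF finite_cell])
  also have "\<dots> = f ?r * ?r * card ?C"
    using rate by simp
  also have "\<dots> = (\<Sum>i\<in>?C. data_score a i * f (data_score a i))"
    using cell_score by simp
  finally show ?thesis
    by simp
qed

lemma sum_labels_calibrated:
  "(\<Sum>i\<in>grp D a. if ys_of D i = 1 then f (data_score a i) else 0)
    = (\<Sum>i\<in>grp D a. data_score a i * f (data_score a i))"
proof -
  let ?cell = "\<lambda>i. c a (xs_of D i)"
  let ?lhs = "\<lambda>i. if ys_of D i = 1 then f (data_score a i) else 0"
  and ?rhs = "\<lambda>i. data_score a i * f (data_score a i)"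
  have "(\<Sum>i\<in>grp D a. ?lhs i) = (\<Sum>m\<in>?cell ` grp D a. \<Sum>i | i \<in> grp D a \<and> ?cell i = m. ?lhs i)"
    by (rule sum.group[symmetric]) (use finite_grp in auto)
  also have "\<dots> = (\<Sum>m\<in>?cell ` grp D a. \<Sum>i | i \<in> grp D a \<and> ?cell i = m. ?rhs i)"
    by (rule sum.cong[OF refl], rule sum_labels_cell) auto
  also have "\<dots> = (\<Sum>i\<in>grp D a. ?rhs i)"
    by (rule sum.group) (use finite_grp in auto)
  finally show ?thesis .
qed

definition true_pos :: "nat \<Rightarrow> real \<Rightarrow> real" where
  "true_pos a \<tau> = (\<Sum>i\<in>grp D a. if ys_of D i = 1 then thr a \<tau> (data_score a i) else 0)"

lemma true_pos_concave:
  assumes "a \<in> {1, 2}" "x \<in> {0..1}" "y \<in> {0..1}" "t \<in> {0..1}"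
  shows "(1 - t) * true_pos a x + t * true_pos a y \<le> true_pos a ((1 - t) * x + t * y)"
proof -
  let ?s = "data_score a"
  define m where "m = (1 - t) * x + t * y"
  have m: "m \<in> {0..1}"
    using assms(2-4) unfolding m_def by (auto intro: convex_bound_le)
  define w where "w i = (1 - t) * thr a x (?s i) + t * thr a y (?s i)" for i
  have "0 \<le> w i \<and> w i \<le> 1" for i
    using thr_bounds[OF assms(1,2)] thr_bounds[OF assms(1,3)] assms(4) unfolding w_def
    by (auto intro: convex_bound_le)
  moreover obtain t' p where tp: "0 \<le> p" "p \<le> 1" "thr a m = thr_clf t' p"
    using thr_threshold[OF assms(1) m] by metis
  moreover have "(\<Sum>i\<in>grp D a. w i) = (\<Sum>i\<in>grp D a. thr a m (?s i))"
    unfolding w_def sum.distrib sum_distrib_left[symmetric] sum_thr[OF assms(1) m]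
      sum_thr[OF assms(1,2)] sum_thr[OF assms(1,3)] by (simp add: m_def algebra_simps)
  ultimately have "(\<Sum>i\<in>grp D a. ?s i * w i) \<le> (\<Sum>i\<in>grp D a. ?s i * thr a m (?s i))"
    unfolding tp(3) by (intro thr_clf_maximizes_weighted_sum finite_grp) auto
  moreover have "(\<Sum>i\<in>grp D a. ?s i * w i)
      = (\<Sum>i\<in>grp D a. (1 - t) * (?s i * thr a x (?s i)) + t * (?s i * thr a y (?s i)))"
    unfolding w_def by (simp add: algebra_simps)
  moreover have "\<dots> = (1 - t) * true_pos a x + t * true_pos a y"
    unfolding true_pos_def sum_labels_calibrated by (simp add: sum.distrib sum_distrib_left)
  ultimately show ?thesis
    unfolding true_pos_def sum_labels_calibrated m_def by simp
qed

lemma true_pos_increment: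
  assumes "a \<in> {1, 2}" "x \<in> {0..1}" "y \<in> {0..1}" "x \<le> y"
  shows "0 \<le> true_pos a x - true_pos a y"
    and "true_pos a x - true_pos a y \<le> (y - x) * group_size a"
proof -
  let ?d = "\<lambda>i. thr a x (data_score a i) - thr a y (data_score a i)"
  have mono: "0 \<le> ?d i" if "i \<in> grp D a" for i
    using thr_antitone[OF assms(1-4) that] by simp
  have diff: "true_pos a x - true_pos a y = (\<Sum>i\<in>grp D a. if ys_of D i = 1 then ?d i else 0)"
    unfolding true_pos_def sum_subtractf[symmetric] by (rule sum.cong) auto
  show "0 \<le> true_pos a x - true_pos a y"
    unfolding diff using mono by (auto intro: sum_nonneg)
  have "true_pos a x - true_pos a y \<le> (\<Sum>i\<in>grp D a. ?d i)"
    unfolding diff using mono by (auto intro: sum_mono)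
  also have "\<dots> = (y - x) * group_size a"
    unfolding sum_subtractf sum_thr[OF assms(1,2)] sum_thr[OF assms(1,3)]
    by (simp add: algebra_simps)
  finally show "true_pos a x - true_pos a y \<le> (y - x) * group_size a" .
qed

lemma true_pos_continuous:
  assumes "a \<in> {1, 2}"
  shows "continuous_on {0..1} (true_pos a)"
proof (rule lipschitz_on_continuous_on, rule lipschitz_onI)
  fix x y :: real
  assume "x \<in> {0..1}" "y \<in> {0..1}"
  then show "dist (true_pos a x) (true_pos a y) \<le> group_size a * dist x y"
    using true_pos_increment[OF assms, of x y] true_pos_increment[OF assms, of y x]
    unfolding dist_real_def by (cases "x \<le> y") (auto simp: abs_if algebra_simps)
qed simp

definition positives :: "nat \<Rightarrow> real" where
  "positives a = real (card {i \<in> grp D a. ys_of D i = 1})"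

definition group_loss :: "nat \<Rightarrow> real \<Rightarrow> real" where
  "group_loss a \<tau> = (\<Sum>i\<in>grp D a.
      if ys_of D i = 1 then 1 - thr a \<tau> (data_score a i) else thr a \<tau> (data_score a i))
    / real (length D)"

definition relevant_grp :: "nat \<Rightarrow> nat set" where
  "relevant_grp a = {i \<in> grp D a. relevant k D i}"

definition group_rate :: "nat \<Rightarrow> real \<Rightarrow> real" where
  "group_rate a \<tau> = (\<Sum>i\<in>relevant_grp a. thr a \<tau> (data_score a i)) / real (card (relevant_grp a))"

lemma length_pos: "0 < real (length D)"
  using score_attained[of 1] unfolding grp_def by auto

lemma group_loss_eq:
  assumes "a \<in> {1, 2}" "\<tau> \<in> {0..1}"
  shows "group_loss a \<tau>
    = (positives a + (1 - \<tau>) * group_size a - 2 * true_pos a \<tau>) / real (length D)"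
proof -
  let ?h = "\<lambda>i. thr a \<tau> (data_score a i)"
  have "(\<Sum>i\<in>grp D a. if ys_of D i = 1 then 1 - ?h i else ?h i)
      = (\<Sum>i\<in>grp D a.
          (if ys_of D i = 1 then 1 else 0) + ?h i - 2 * (if ys_of D i = 1 then ?h i else 0))"
    by (rule sum.cong) auto
  also have "\<dots> = positives a + (1 - \<tau>) * group_size a - 2 * true_pos a \<tau>"
    unfolding sum_subtractf sum.distrib sum_distrib_left[symmetric] sum_thr[OF assms]
      true_pos_def positives_def sum.inter_filter[OF finite_grp, symmetric] by simp
  finally show ?thesis
    unfolding group_loss_def by simp
qed

lemma group_rate_DemParity:
  assumes "k = DemParity" "a \<in> {1, 2}" "\<tau> \<in> {0..1}"
  shows "group_rate a \<tau> = 1 - \<tau>"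
proof -
  have "relevant_grp a = grp D a"
    using assms(1) unfolding relevant_grp_def relevant_def by simp
  then show ?thesis
    using sum_thr[OF assms(2,3)] group_size_pos[OF assms(2)] unfolding group_rate_def by simp
qed

lemma positives_pos: "k = EqOpp \<Longrightarrow> a \<in> {1, 2} \<Longrightarrow> 0 < positives a"
  using positives_exist finite_grp unfolding positives_def by (fastforce simp: card_gt_0_iff)

lemma group_rate_EqOpp:
  assumes "k = EqOpp"
  shows "group_rate a \<tau> = true_pos a \<tau> / positives a"
proof -
  have "relevant_grp a = {i \<in> grp D a. ys_of D i = 1}"
    using assms unfolding relevant_grp_def relevant_def by simp
  then show ?thesis
    unfolding group_rate_def true_pos_def positives_def
    by (simp only: sum.inter_filter[OF finite_grp])
qed

lemma group_loss_mixture: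
  assumes "a \<in> {1, 2}" "x \<in> {0..1}" "y \<in> {0..1}" "s \<in> {0..1}" "(1 - t) * x + t * y \<le> s"
    and "(1 - t) * true_pos a x + t * true_pos a y \<le> true_pos a s"
  shows "group_loss a s \<le> (1 - t) * group_loss a x + t * group_loss a y"
proof -
  let ?N = "group_size a" and ?P = "positives a"
  let ?num = "\<lambda>\<tau>. ?P + (1 - \<tau>) * ?N - 2 * true_pos a \<tau>"
  have "(1 - s) * ?N \<le> (1 - ((1 - t) * x + t * y)) * ?N"
    using assms(5) group_size_pos[OF assms(1)] by (intro mult_right_mono) auto
  then have "?num s
      \<le> ?P + (1 - ((1 - t) * x + t * y)) * ?N - 2 * ((1 - t) * true_pos a x + t * true_pos a y)"
    using assms(6) by (intro diff_mono add_left_mono) auto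
  also have "\<dots> = (1 - t) * ?num x + t * ?num y"
    by (simp only: ring_distribs)
  finally have "?num s / length D \<le> ((1 - t) * ?num x + t * ?num y) / length D"
    using length_pos by (simp add: divide_right_mono)
  then show ?thesis
    unfolding group_loss_eq[OF assms(1,2)] group_loss_eq[OF assms(1,3)] group_loss_eq[OF assms(1,4)]
    by (simp add: add_divide_distrib)
qed

lemma convex_tradeoff_group:
  assumes "a \<in> {1, 2}"
  shows "convex_tradeoff (group_rate a) (group_loss a)"
  unfolding convex_tradeoff_def
proof (intro ballI)
  fix x y t :: real
  assume xyt: "x \<in> {0..1}" "y \<in> {0..1}" "t \<in> {0..1}"
  define m where "m = (1 - t) * x + t * y"
  have m: "m \<in> {0..1}" "m \<le> max x y"
    using xyt unfolding m_def by (auto intro: convex_bound_le)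
  define v where "v = (1 - t) * true_pos a x + t * true_pos a y"
  have concave: "v \<le> true_pos a m"
    unfolding v_def m_def by (rule true_pos_concave[OF assms xyt])
  show "\<exists>s\<in>{0..1}. group_rate a s = (1 - t) * group_rate a x + t * group_rate a y
      \<and> group_loss a s \<le> (1 - t) * group_loss a x + t * group_loss a y"
  proof (cases k)
    case DemParity
    note rate = group_rate_DemParity[OF DemParity assms]
    have "group_rate a m = (1 - t) * group_rate a x + t * group_rate a y"
      unfolding rate[OF m(1)] rate[OF xyt(1)] rate[OF xyt(2)] by (simp add: m_def algebra_simps)
    moreover have "group_loss a m \<le> (1 - t) * group_loss a x + t * group_loss a y"
      using concave m(1) unfolding v_def m_def by (intro group_loss_mixture assms xyt) auto
    ultimately show ?thesis
      using m(1) by blast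
  next
    case EqOpp
    \<comment> \<open>The rate is proportional to the true positives, which are antitone and concave, so the
      mixed rate is attained at a threshold above the mixed one.\<close>
    have "(1 - t) * true_pos a (max x y) + t * true_pos a (max x y) \<le> v"
      using true_pos_increment(1)[OF assms, of x "max x y"]
        true_pos_increment(1)[OF assms, of y "max x y"] xyt
      unfolding v_def by (intro add_mono mult_left_mono) auto
    then have "true_pos a (max x y) \<le> v"
      by (simp add: algebra_simps)
    moreover have "continuous_on {m..max x y} (true_pos a)"
      using m xyt by (intro continuous_on_subset[OF true_pos_continuous[OF assms]]) auto
    ultimately obtain s where s: "m \<le> s" "s \<le> max x y" "true_pos a s = v"
      using IVT2'[of "true_pos a" "max x y" v m] concave m(2) by blast
    then have "s \<in> {0..1}"
      using m(1) xyt by auto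
    moreover have "group_rate a s = (1 - t) * group_rate a x + t * group_rate a y"
      unfolding group_rate_EqOpp[OF EqOpp] s(3) v_def by (simp add: add_divide_distrib)
    moreover have "group_loss a s \<le> (1 - t) * group_loss a x + t * group_loss a y"
      using s \<open>s \<in> {0..1}\<close> unfolding v_def m_def by (intro group_loss_mixture assms xyt) auto
    ultimately show ?thesis
      by blast
  qed
qed

lemma group_rate_loss_inj:
  assumes "a \<in> {1, 2}"
  shows "inj_on (\<lambda>\<tau>. (group_rate a \<tau>, group_loss a \<tau>)) {0..1}"
proof (rule inj_onI)
  fix x y :: real
  assume xy: "x \<in> {0..1}" "y \<in> {0..1}"
    "(group_rate a x, group_loss a x) = (group_rate a y, group_loss a y)"
  show "x = y"
  proof (cases k)
    case DemParity
    then show ?thesis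
      using xy group_rate_DemParity[OF DemParity assms] by simp
  next
    case EqOpp
    then have "true_pos a x = true_pos a y"
      using xy(3) positives_pos[OF EqOpp assms] unfolding group_rate_EqOpp[OF EqOpp] by simp
    then have "(1 - x) * group_size a = (1 - y) * group_size a"
      using xy length_pos unfolding group_loss_eq[OF assms xy(1)] group_loss_eq[OF assms xy(2)]
      by simp
    then show ?thesis
      using group_size_pos[OF assms] by simp
  qed
qed

lemma group_rate_antitone:
  assumes "a \<in> {1, 2}" "x \<in> {0..1}" "y \<in> {0..1}" "x \<le> y"
  shows "group_rate a y \<le> group_rate a x"
proof (cases k)
  case DemParity
  then show ?thesis
    using assms group_rate_DemParity by simp
next
  case EqOpp
  then show ?thesis
    using true_pos_increment(1)[OF assms] positives_pos[OF EqOpp assms(1)]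
    unfolding group_rate_EqOpp[OF EqOpp] by (simp add: divide_right_mono)
qed

lemma group_rate_continuous: "a \<in> {1, 2} \<Longrightarrow> continuous_on {0..1} (group_rate a)"
proof (cases k)
  case DemParity
  assume "a \<in> {1, 2}"
  have "continuous_on {0..1} (\<lambda>\<tau>::real. 1 - \<tau>)"
    by (intro continuous_intros)
  then show ?thesis
    by (rule continuous_on_eq) (use group_rate_DemParity[OF DemParity \<open>a \<in> {1, 2}\<close>] in auto)
next
  case EqOpp
  assume "a \<in> {1, 2}"
  then show ?thesis
    unfolding group_rate_EqOpp[OF EqOpp, abs_def]
    by (intro continuous_on_divide true_pos_continuous continuous_on_const)
      (use positives_pos[OF EqOpp \<open>a \<in> {1, 2}\<close>] in auto)
qed

lemma group_loss_continuous:
  assumes "a \<in> {1, 2}"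
  shows "continuous_on {0..1} (group_loss a)"
proof -
  have "continuous_on {0..1}
      (\<lambda>\<tau>. (positives a + (1 - \<tau>) * group_size a - 2 * true_pos a \<tau>) / length D)"
    using length_pos by (intro continuous_intros true_pos_continuous[OF assms]) auto
  then show ?thesis
    by (rule continuous_on_eq) (use group_loss_eq[OF assms] in auto)
qed

lemma group_rate_zero:
  assumes "a \<in> {1, 2}"
  shows "group_rate a 0 = 1"
proof (cases k)
  case DemParity
  then show ?thesis
    using group_rate_DemParity[OF DemParity assms] by simp
next
  case EqOpp
  have "true_pos a 0 = positives a"
    unfolding true_pos_def positives_def using thr_zero[OF assms]
    by (simp add: sum.inter_filter[OF finite_grp, symmetric])
  then show ?thesis
    using positives_pos[OF EqOpp assms] unfolding group_rate_EqOpp[OF EqOpp] by simp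
qed

sublocale tradeoff: two_group_tradeoff "group_rate 1" "group_rate 2" "group_loss 1" "group_loss 2"
  by unfold_locales
    (simp_all add: group_rate_continuous group_loss_continuous group_rate_antitone
      convex_tradeoff_group group_rate_loss_inj group_rate_zero)

lemma pred_at_eq:
  "i \<in> grp D 1 \<Longrightarrow> pred_at D c \<tau> i = thr 1 (fst \<tau>) (data_score 1 i)"
  "i \<in> grp D 2 \<Longrightarrow> pred_at D c \<tau> i = thr 2 (snd \<tau>) (data_score 2 i)"
  unfolding pred_at_def pp_clf_def grp_def by auto

lemma mis_loss_eq: "mis_loss D c = tradeoff.loss"
proof
  fix \<tau> :: "real \<times> real"
  let ?err = "\<lambda>i. if ys_of D i = 1 then 1 - pred_at D c \<tau> i else pred_at D c \<tau> i"
  have "{..<length D} = grp D 1 \<union> grp D 2" "grp D 1 \<inter> grp D 2 = {}"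
    using labels unfolding grp_def by auto
  then have "(\<Sum>i<length D. ?err i) = (\<Sum>i\<in>grp D 1. ?err i) + (\<Sum>i\<in>grp D 2. ?err i)"
    using finite_grp by (simp add: sum.union_disjoint)
  also have "\<dots> = (group_loss 1 (fst \<tau>) + group_loss 2 (snd \<tau>)) * length D"
  proof -
    have "(\<Sum>i\<in>grp D 1. ?err i) = group_loss 1 (fst \<tau>) * length D"
      unfolding group_loss_def using length_pos by simp (rule sum.cong, simp_all add: pred_at_eq(1))
    moreover have "(\<Sum>i\<in>grp D 2. ?err i) = group_loss 2 (snd \<tau>) * length D"
      unfolding group_loss_def using length_pos by simp (rule sum.cong, simp_all add: pred_at_eq(2))
    ultimately show ?thesis
      by (simp add: algebra_simps)
  qed
  finally show "mis_loss D c \<tau> = tradeoff.loss \<tau>"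
    unfolding mis_loss_def tradeoff.loss_def using length_pos by simp
qed

lemma bias_eq: "bias k D c = tradeoff.disparity"
proof
  fix \<tau> :: "real \<times> real"
  have "(\<Sum>i | i \<in> grp D 1 \<and> relevant k D i. pred_at D c \<tau> i)
      = (\<Sum>i\<in>relevant_grp 1. thr 1 (fst \<tau>) (data_score 1 i))"
    "(\<Sum>i | i \<in> grp D 2 \<and> relevant k D i. pred_at D c \<tau> i)
      = (\<Sum>i\<in>relevant_grp 2. thr 2 (snd \<tau>) (data_score 2 i))"
    unfolding relevant_grp_def by (auto simp: pred_at_eq intro: sum.cong)
  then show "bias k D c \<tau> = tradeoff.disparity \<tau>"
    unfolding bias_def tradeoff.disparity_def group_rate_def relevant_grp_def by simp
qed

lemma pp_select_eq: "pp_select k D c \<beta> = tradeoff.select \<beta>"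
proof -
  have "feasible k D c \<beta> = tradeoff.admissible \<beta>"
    unfolding feasible_def tradeoff.admissible_def bias_eq by auto
  then show ?thesis
    unfolding pp_select_def tradeoff.select_def tradeoff.lexmin_def mis_loss_eq bias_eq by simp
qed

theorem gabos_pp_slack_consistent: "slack_consistent (gabos_pp k D c)"
  unfolding slack_consistent_iff
proof (intro allI impI)
  fix x :: 'x and a :: nat and \<beta>1 \<beta>2 \<beta>3 :: real
  assume "a \<in> {1, 2} \<and> 0 < \<beta>1 \<and> \<beta>1 < \<beta>2 \<and> \<beta>2 < \<beta>3"
  then have a: "a \<in> {1, 2}" and \<beta>: "0 < \<beta>1" "\<beta>1 < \<beta>2" "\<beta>2 < \<beta>3"
    by auto
  obtain i where i: "i \<in> grp D a" "score D c x a = data_score a i"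
    using score_attained[OF a] by blast
  define T where "T \<beta> = (if a = 1 then fst (tradeoff.select \<beta>) else snd (tradeoff.select \<beta>))" for \<beta>
  have gabos: "gabos_pp k D c \<beta> x a = thr a (T \<beta>) (data_score a i)" for \<beta>
    unfolding gabos_pp_def pp_clf_def pp_select_eq T_def i(2) by simp
  have "T \<beta> \<in> {0..1}" if "0 \<le> \<beta>" for \<beta>
    using tradeoff.select_square[OF that] unfolding T_def by (auto simp: mem_Times_iff)
  then have "T \<beta>1 \<in> {0..1}" "T \<beta>2 \<in> {0..1}" "T \<beta>3 \<in> {0..1}"
    using \<beta> by auto
  moreover have "thr a v (data_score a i) \<le> thr a u (data_score a i)"
    if "u \<in> {0..1}" "v \<in> {0..1}" "u \<le> v" for u v
    by (rule thr_antitone[OF a that i(1)])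
  moreover have "monotone_triple (T \<beta>1) (T \<beta>2) (T \<beta>3)"
    using tradeoff.select_between[OF \<beta>] unfolding T_def by simp
  ultimately show
    "monotone_triple (gabos_pp k D c \<beta>1 x a) (gabos_pp k D c \<beta>2 x a) (gabos_pp k D c \<beta>3 x a)"
    unfolding gabos using monotone_triple_antitone[where f = "\<lambda>\<tau>. thr a \<tau> (data_score a i)"]
    by blast
qed

end

theorem theorem4:
  fixes D :: "'x dataset" and c :: "nat \<Rightarrow> 'x \<Rightarrow> nat" and M :: "nat \<Rightarrow> nat"
    and k :: bias_kind
  assumes "\<forall>i<length D. as_of D i \<in> {1, 2} \<and> ys_of D i \<in> {0, 1}"
    and "\<forall>j\<in>{1, 2}. \<forall>x. c j x \<in> {1..M j}"
    and "\<forall>j\<in>{1, 2}. \<forall>m\<in>{1..M j}. \<exists>i\<in>grp D j. c j (xs_of D i) = m"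
    and "k = EqOpp \<Longrightarrow> \<forall>j\<in>{1, 2}. \<exists>i\<in>grp D j. ys_of D i = 1"
  shows "slack_consistent (gabos_pp k D c)"
proof -
  interpret gabos_setting D c M k
    using assms by unfold_locales auto
  show ?thesis
    by (rule gabos_pp_slack_consistent)
qed

end
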